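(* Let $\mathcal{P},\mathcal{S}$ be patterns, let $P\in\mathbb{R}^{n\times n}(\mathcal{P})$ be a reversible stochastic matrix with stationary distribution $\boldsymbol{\pi}$, $\hat{\boldsymbol{\pi}}=\boldsymbol{\pi}^{1/2}$ entrywise, and let \[ \mathcal{M}_{P,\boldsymbol{\pi}}=\Big\{X\in\mathbb{R}^{n\times n}_{\mathrm{exact}}(\mathcal{P}\cup\mathcal{S}) : X=X^\top,\ X\hat{\boldsymbol{\pi}}=\hat{\boldsymbol{\pi}},\ X_{ij}>0\text{ if }\{i,j\}\in\mathcal{S},\ X_{ij}=\tfrac{\hat\pi_i}{\hat\pi_j}P_{ij}\text{ if }\{i,j\}\notin\mathcal{S}\Big\}. \] Let $S\in\mathbb{R}^{n\times n}$ be given by $S_{ij}=1$ if $\{i,j\}\in\mathcal{S}$ and $S_{ij}=0$ otherwise. Then for every $X\in\mathcal{M}_{P,\boldsymbol{\pi}}$ the matrix \[ \operatorname{diag}\big((X\odot S)\boldsymbol{\pi}\big)+D_{\hat{\boldsymbol{\pi}}}(X\odot S)D_{\hat{\boldsymbol{\pi}}} \] is invertible.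
   Context: A stochastic matrix is nonnegative with row sums $1$; it is reversible if irreducible and its (unique, positive) stationary distribution $\boldsymbol{\pi}$ satisfies $\pi_iP_{ij}=\pi_jP_{ji}$ for all $i,j$. A pattern is a set of unordered pairs $\{i,j\}$, $1\le i,j\le n$, containing $\{i,i\}$ for all $i$. $\mathbb{R}^{n\times n}(\mathcal{S})$ is the set of real $n\times n$ matrices $\Delta$ with $\Delta_{ij}=\Delta_{ji}=0$ whenever $\{i,j\}\notin\mathcal{S}$; $\mathbb{R}^{n\times n}_{\mathrm{exact}}(\mathcal{S})$ is the set of real $n\times n$ matrices $\Delta$ with ($\Delta_{ij}\ne0$ and $\Delta_{ji}\ne0$) if and only if $\{i,j\}\in\mathcal{S}$. $\odot$ is the entrywise product; $\operatorname{diag}(\mathbf{v})$ and $D_{\mathbf{v}}$ both denote the diagonal matrix with diagonal $\mathbf{v}$. *)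

theory Defs
  imports "HOL-Analysis.Analysis"
begin

text \<open>Matrices are n x n real matrices indexed by a finite type 'n.
  A pattern is a set of unordered pairs, represented as sets {i,j} (with {i,i} = {i}).\<close>

definition is_pattern :: "'n set set \<Rightarrow> bool" where
  "is_pattern S \<longleftrightarrow> (\<forall>e\<in>S. \<exists>i j. e = {i, j}) \<and> (\<forall>i. {i, i} \<in> S)"

definition in_pattern :: "real^'n^'n \<Rightarrow> 'n set set \<Rightarrow> bool" where
  "in_pattern A S \<longleftrightarrow> (\<forall>i j. {i, j} \<notin> S \<longrightarrow> A$i$j = 0 \<and> A$j$i = 0)"

definition in_exact_pattern :: "real^'n^'n \<Rightarrow> 'n set set \<Rightarrow> bool" where
  "in_exact_pattern A S \<longleftrightarrow> (\<forall>i j. (A$i$j \<noteq> 0 \<and> A$j$i \<noteq> 0) \<longleftrightarrow> {i, j} \<in> S)"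

definition stochastic :: "real^'n^'n \<Rightarrow> bool" where
  "stochastic P \<longleftrightarrow> (\<forall>i j. P$i$j \<ge> 0) \<and> (\<forall>i. (\<Sum>j\<in>UNIV. P$i$j) = 1)"

definition irreducible_mat :: "real^'n^'n \<Rightarrow> bool" where
  "irreducible_mat P \<longleftrightarrow> (\<forall>i j. (i, j) \<in> {(a, b). P$a$b \<noteq> 0}\<^sup>*)"

definition stationary_distribution :: "real^'n^'n \<Rightarrow> real^'n \<Rightarrow> bool" where
  "stationary_distribution P \<pi> \<longleftrightarrow>
     (\<forall>i. \<pi>$i \<ge> 0) \<and> (\<Sum>i\<in>UNIV. \<pi>$i) = 1 \<and> \<pi> v* P = \<pi>"

text \<open>P is a reversible stochastic matrix with stationary distribution pi
  (the stationary distribution of an irreducible stochastic matrix is unique and positive).\<close>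
definition reversible_with :: "real^'n^'n \<Rightarrow> real^'n \<Rightarrow> bool" where
  "reversible_with P \<pi> \<longleftrightarrow> stochastic P \<and> irreducible_mat P \<and>
     stationary_distribution P \<pi> \<and> (\<forall>i. \<pi>$i > 0) \<and>
     (\<forall>i j. \<pi>$i * P$i$j = \<pi>$j * P$j$i)"

definition hadamard :: "real^'n^'n \<Rightarrow> real^'n^'n \<Rightarrow> real^'n^'n" where
  "hadamard A B = (\<chi> i j. A$i$j * B$i$j)"

definition diag_mat :: "real^'n \<Rightarrow> real^'n^'n" where
  "diag_mat v = (\<chi> i j. if i = j then v$i else 0)"

definition pattern_indicator :: "'n set set \<Rightarrow> real^'n^'n" where
  "pattern_indicator S = (\<chi> i j. if {i, j} \<in> S then 1 else 0)"

definition M_set :: "'n set set \<Rightarrow> 'n set set \<Rightarrow> real^'n^'n \<Rightarrow> real^'n \<Rightarrow> (real^'n^'n) set" where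
  "M_set Pp Sp P \<pi> = (let \<pi>h = (\<chi> i. sqrt (\<pi>$i)) in
     {X. in_exact_pattern X (Pp \<union> Sp) \<and> transpose X = X \<and> X *v \<pi>h = \<pi>h \<and>
         (\<forall>i j. {i, j} \<in> Sp \<longrightarrow> X$i$j > 0) \<and>
         (\<forall>i j. {i, j} \<notin> Sp \<longrightarrow> X$i$j = \<pi>h$i / \<pi>h$j * P$i$j)})"

end

theory Submission
  imports Defs
begin

text \<open>Write \<open>Y = X \<odot> S\<close> and \<open>s = sqrt \<pi>\<close>, so that \<open>\<pi> = s\<^sup>2\<close>. For symmetric \<open>Y\<close> the quadratic
  form of \<open>A = diag (Y s\<^sup>2) + D\<^sub>s Y D\<^sub>s\<close> is \<open>x\<^sup>T A x = (1/2) \<Sum>\<^sub>i\<^sub>k Y\<^sub>i\<^sub>k (s\<^sub>k x\<^sub>i + s\<^sub>i x\<^sub>k)\<^sup>2\<close>. As \<open>Y \<ge> 0\<close>,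
  \<open>A x = 0\<close> forces every summand to vanish, in particular the diagonal ones \<open>4 Y\<^sub>i\<^sub>i s\<^sub>i\<^sup>2 x\<^sub>i\<^sup>2\<close>,
  where \<open>Y\<^sub>i\<^sub>i > 0\<close> because \<open>{i,i}\<close> lies in the pattern. So only the symmetry of \<open>X\<close>, its
  positivity on the pattern and the positivity of \<open>\<pi>\<close> are used.\<close>

lemma diag_mat_mult_vector: "diag_mat v *v x = (\<chi> i. v $ i * x $ i)"
  unfolding diag_mat_def matrix_vector_mult_def vec_eq_iff
  by (simp add: if_distrib[of "\<lambda>a. a * _"] cong: if_cong)

lemma hadamard_pattern_indicator_nth:
  "hadamard X (pattern_indicator S) $ i $ j = (if {i, j} \<in> S then X $ i $ j else 0)"
  by (simp add: hadamard_def pattern_indicator_def)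

lemma inner_diag_plus_sandwich:
  fixes Y :: "real^'n::finite^'n" and s x :: "real^'n"
  assumes "transpose Y = Y"
  shows "x \<bullet> ((diag_mat (Y *v (\<chi> i. (s$i)\<^sup>2)) + diag_mat s ** Y ** diag_mat s) *v x)
           = (\<Sum>i\<in>UNIV. \<Sum>k\<in>UNIV. Y$i$k * (s$k * x$i + s$i * x$k)\<^sup>2) / 2"
proof -
  define T where "T i k = Y$i$k * ((s$k)\<^sup>2 * (x$i)\<^sup>2 + s$i * s$k * x$i * x$k)" for i k
  have Y_sym: "Y$i$k = Y$k$i" for i k
    using assms by (metis transpose_def vec_lambda_beta)
  have "x \<bullet> ((diag_mat (Y *v (\<chi> i. (s$i)\<^sup>2)) + diag_mat s ** Y ** diag_mat s) *v x)
      = (\<Sum>i\<in>UNIV. x$i * ((Y *v (\<chi> i. (s$i)\<^sup>2))$i * x$i + s$i * (Y *v (\<chi> k. s$k * x$k))$i))"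
    by (simp add: inner_vec_def matrix_vector_mult_add_rdistrib matrix_vector_mul_assoc[symmetric]
        diag_mat_mult_vector)
  also have "\<dots> = (\<Sum>i\<in>UNIV. \<Sum>k\<in>UNIV. T i k)"
    by (simp add: T_def matrix_vector_mult_def sum_distrib_left
        sum_distrib_right sum.distrib[symmetric] power2_eq_square algebra_simps)
  also have "\<dots> = ((\<Sum>i\<in>UNIV. \<Sum>k\<in>UNIV. T i k) + (\<Sum>i\<in>UNIV. \<Sum>k\<in>UNIV. T k i)) / 2"
    by (subst (2) sum.swap) simp
  also have "\<dots> = (\<Sum>i\<in>UNIV. \<Sum>k\<in>UNIV. Y$i$k * (s$k * x$i + s$i * x$k)\<^sup>2) / 2"
    by (simp add: sum.distrib[symmetric] T_def Y_sym power2_eq_square algebra_simps)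
  finally show ?thesis .
qed

lemma invertible_diag_plus_sandwich:
  fixes Y :: "real^'n::finite^'n" and s :: "real^'n"
  assumes "transpose Y = Y" and "\<And>i k. Y$i$k \<ge> 0" and "\<And>i. Y$i$i > 0" and "\<And>i. s$i \<noteq> 0"
  shows "invertible (diag_mat (Y *v (\<chi> i. (s$i)\<^sup>2)) + diag_mat s ** Y ** diag_mat s)"
    (is "invertible ?A")
proof -
  have "x = 0" if "?A *v x = 0" for x
  proof -
    define q where "q i k = Y$i$k * (s$k * x$i + s$i * x$k)\<^sup>2" for i k
    have q_nonneg: "q i k \<ge> 0" for i k
      using assms(2) by (simp add: q_def)
    have "(\<Sum>i\<in>UNIV. \<Sum>k\<in>UNIV. q i k) = 0"
      using inner_diag_plus_sandwich[OF assms(1), of x s] that by (simp add: q_def)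
    then have q_diag: "q i i = 0" for i
      by (simp add: sum_nonneg_eq_0_iff sum_nonneg q_nonneg)
    have "x$i = 0" for i
      using q_diag[of i] assms(3,4)[of i] by (simp add: q_def)
    then show "x = 0"
      by (simp add: vec_eq_iff)
  qed
  then show ?thesis
    unfolding invertible_left_inverse matrix_left_invertible_ker by blast
qed

theorem proposition4p7:
  fixes Pp Sp :: "'n::finite set set" and P :: "real^'n^'n" and \<pi> :: "real^'n" and X :: "real^'n^'n"
  assumes "is_pattern Pp" and "is_pattern Sp"
    and "in_pattern P Pp"
    and "reversible_with P \<pi>"
    and "X \<in> M_set Pp Sp P \<pi>"
  shows "invertible (diag_mat (hadamard X (pattern_indicator Sp) *v \<pi>)
           + diag_mat (\<chi> i. sqrt (\<pi>$i)) ** hadamard X (pattern_indicator Sp) ** diag_mat (\<chi> i. sqrt (\<pi>$i)))"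
proof -
  define Y where "Y = hadamard X (pattern_indicator Sp)"
  have \<pi>_pos: "\<pi>$i > 0" for i
    using assms(4) by (simp add: reversible_with_def)
  have X_sym: "transpose X = X" and X_pos: "\<And>i j. {i, j} \<in> Sp \<Longrightarrow> X$i$j > 0"
    using assms(5) by (auto simp: M_set_def Let_def)
  have "\<pi> = (\<chi> i. (sqrt (\<pi>$i))\<^sup>2)"
    using \<pi>_pos by (simp add: vec_eq_iff less_imp_le)
  moreover have "transpose Y = Y"
    using X_sym by (simp add: Y_def vec_eq_iff transpose_def hadamard_pattern_indicator_nth
        insert_commute)
  moreover have "Y$i$k \<ge> 0" for i k
    using X_pos[of i k] by (simp add: Y_def hadamard_pattern_indicator_nth less_imp_le)
  moreover have "Y$i$i > 0" for i
    using assms(2) X_pos[of i i] by (simp add: Y_def hadamard_pattern_indicator_nth is_pattern_def)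
  moreover have "(\<chi> i. sqrt (\<pi>$i))$i \<noteq> 0" for i
    using \<pi>_pos[of i] by simp
  ultimately show ?thesis
    using invertible_diag_plus_sandwich[of Y "\<chi> i. sqrt (\<pi>$i)"] by (simp add: Y_def)
qed

end
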